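(* Let $X$ be a Banach space and $\bar e=(e_j)_{j\in\mathbb N}$ an asymptotic model generated by a normalized weakly null array in $X$. Then for every $k\in\mathbb N$ and $\varepsilon>0$ the metric space $([\mathbb N]^k,d^{(k)}_{\bar e})$ bi-Lipschitzly embeds into $X$ with distortion at most $2+\varepsilon$.
   Context: A normalized weakly null array is a family $(x^{(i)}_j:i,j\in\mathbb N)$ of unit vectors with each row $(x^{(i)}_j)_j$ weakly null. A basic sequence $(e_i)$ is an asymptotic model generated by it if there is a null sequence $(\varepsilon_n)$ in $(0,1)$ with $\big|\|\sum_{i=1}^na_ix^{(i)}_{k_i}\|-\|\sum_{i=1}^na_ie_i\|\big|<\varepsilon_n$ for all $n$, $(a_i)\subset[-1,1]$, $n\le k_1<\dots<k_n$. Such $\bar e$ is normalized and $1$-suppression unconditional. For $\bar m=\{m_1<\dots<m_k\},\bar n=\{n_1<\dots<n_k\}\in[\mathbb N]^k$, $d^{(k)}_{\bar e}(\bar m,\bar n)=\|\sum_{j\in F}e_j\|$ with $F=\{j:m_j\ne n_j\}$. A metric space $M$ bi-Lipschitzly embeds into $X$ with distortion at most $D$ if there are $s>0$ and $f:M\to X$ with $s\,d(x,y)\le\|f(x)-f(y)\|\le sD\,d(x,y)$. *)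

theory Defs
  imports "HOL-Analysis.Analysis"
begin

text \<open>Indexing convention: the paper's \<open>\<nat> = {1,2,...}\<close> is shifted to Isabelle's
  \<open>nat = {0,1,...}\<close>; row \<open>i\<close>, column \<open>j\<close>, basis vector \<open>e j\<close> all start at 0.\<close>

definition weakly_null :: "(nat \<Rightarrow> 'a::real_normed_vector) \<Rightarrow> bool" where
  "weakly_null x \<longleftrightarrow>
     (\<forall>f :: 'a \<Rightarrow> real. bounded_linear f \<longrightarrow> (\<lambda>j. f (x j)) \<longlonglongrightarrow> 0)"

definition normalized_weakly_null_array :: "(nat \<Rightarrow> nat \<Rightarrow> 'a::real_normed_vector) \<Rightarrow> bool" where
  "normalized_weakly_null_array x \<longleftrightarrow>
     (\<forall>i j. norm (x i j) = 1) \<and> (\<forall>i. weakly_null (x i))"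

definition basic_sequence :: "(nat \<Rightarrow> 'b::real_normed_vector) \<Rightarrow> bool" where
  "basic_sequence e \<longleftrightarrow>
     (\<forall>y \<in> closure (span (range e)).
        \<exists>!a :: nat \<Rightarrow> real. (\<lambda>n. \<Sum>i<n. a i *\<^sub>R e i) \<longlonglongrightarrow> y)"

definition asymptotic_model ::
  "(nat \<Rightarrow> 'b::real_normed_vector) \<Rightarrow> (nat \<Rightarrow> nat \<Rightarrow> 'a::real_normed_vector) \<Rightarrow> bool" where
  "asymptotic_model e x \<longleftrightarrow> basic_sequence e \<and>
     (\<exists>\<epsilon> :: nat \<Rightarrow> real. (\<forall>n. 0 < \<epsilon> n \<and> \<epsilon> n < 1) \<and> \<epsilon> \<longlonglongrightarrow> 0 \<and>
        (\<forall>n (a :: nat \<Rightarrow> real) (k :: nat \<Rightarrow> nat).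
           (\<forall>i<n. -1 \<le> a i \<and> a i \<le> 1) \<longrightarrow>
           (0 < n \<longrightarrow> n \<le> k 0) \<longrightarrow>
           (\<forall>i j. i < j \<and> j < n \<longrightarrow> k i < k j) \<longrightarrow>
           \<bar>norm (\<Sum>i<n. a i *\<^sub>R x i (k i)) - norm (\<Sum>i<n. a i *\<^sub>R e i)\<bar> < \<epsilon> n))"

definition ksets :: "nat \<Rightarrow> nat set set" where
  "ksets k = {M. finite M \<and> card M = k}"

definition dk :: "(nat \<Rightarrow> 'b::real_normed_vector) \<Rightarrow> nat \<Rightarrow> nat set \<Rightarrow> nat set \<Rightarrow> real" where
  "dk e k M N = norm (\<Sum>j\<in>{j. j < k \<and> sorted_list_of_set M ! j \<noteq> sorted_list_of_set N ! j}. e j)"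

end

theory Submission
  imports Defs "HOL-Library.Ramsey"
begin

definition dominated_graph :: "('a::real_vector \<Rightarrow> real) \<Rightarrow> ('a \<times> real) set \<Rightarrow> bool" where
  "dominated_graph p G \<longleftrightarrow>
     subspace G \<and> (\<forall>w. (0, w) \<in> G \<longrightarrow> w = 0) \<and> (\<forall>(u, v) \<in> G. v \<le> p u)"

lemma dominated_graph_unique:
  assumes "dominated_graph p G" "(u, v) \<in> G" "(u, v') \<in> G"
  shows "v = v'"
proof -
  have "subspace G" using assms(1) by (simp add: dominated_graph_def)
  then have "(u, v) - (u, v') \<in> G" using assms(2,3) by (rule subspace_diff)
  then have "(0, v - v') \<in> G" by simp
  then have "v - v' = 0"
    using assms(1) unfolding dominated_graph_def by blast
  then show ?thesis by simp
qed

lemma dominated_graph_le: "dominated_graph p G \<Longrightarrow> (u, v) \<in> G \<Longrightarrow> v \<le> p u"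
  unfolding dominated_graph_def by blast

lemma dominated_graph_one_step_bound:
  fixes p :: "'a::real_vector \<Rightarrow> real"
  assumes sub: "\<And>x y. p (x + y) \<le> p x + p y" and G: "dominated_graph p G"
  shows "\<exists>c. \<forall>(u, v) \<in> G. v - p (u - x0) \<le> c \<and> c \<le> p (u + x0) - v"
proof -
  have sG: "subspace G" using G by (simp add: dominated_graph_def)
  have key: "v - p (u - x0) \<le> p (u' + x0) - v'" if "(u, v) \<in> G" "(u', v') \<in> G" for u v u' v'
  proof -
    have "(u + u', v + v') \<in> G" using subspace_add[OF sG that] by simp
    then have "v + v' \<le> p ((u - x0) + (u' + x0))" using dominated_graph_le[OF G] by simp
    also have "\<dots> \<le> p (u - x0) + p (u' + x0)" by (rule sub)
    finally show ?thesis by simp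
  qed
  define S where "S = (\<lambda>(u, v). v - p (u - x0)) ` G"
  have "(0, 0) \<in> G" using subspace_0[OF sG] by (simp add: zero_prod_def)
  then have "S \<noteq> {}" and "bdd_above S"
    unfolding S_def using key[OF _ \<open>(0, 0) \<in> G\<close>] by (auto intro!: bdd_aboveI[where M = "p x0"])
  with key show ?thesis
    by (intro exI[of _ "Sup S"]) (auto simp: S_def intro!: cSup_upper cSup_least)
qed

lemma dominated_graph_extend:
  fixes p :: "'a::real_vector \<Rightarrow> real"
  assumes sub: "\<And>x y. p (x + y) \<le> p x + p y"
    and hom: "\<And>x t. 0 < t \<Longrightarrow> p (t *\<^sub>R x) = t * p x"
    and G: "dominated_graph p G" and x0: "x0 \<notin> fst ` G"
  obtains G' where "dominated_graph p G'" "G \<subset> G'"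
proof -
  have sG: "subspace G" using G by (simp add: dominated_graph_def)
  obtain c where c: "\<And>u v. (u, v) \<in> G \<Longrightarrow> v - p (u - x0) \<le> c \<and> c \<le> p (u + x0) - v"
    using dominated_graph_one_step_bound[OF sub G, of x0] by auto
  define G' where "G' = {g + y | g y. g \<in> G \<and> y \<in> span {(x0, c)}}"
  have G'_iff: "w \<in> G' \<longleftrightarrow> (\<exists>u v t. (u, v) \<in> G \<and> w = (u + t *\<^sub>R x0, v + t * c))" for w
    unfolding G'_def span_singleton by force
  have "subspace G'"
    unfolding G'_def by (intro subspace_sums sG subspace_span)
  moreover have "w = 0" if w: "(0, w) \<in> G'" for w
  proof -
    obtain u v t where uv: "(u, v) \<in> G" and eq: "u + t *\<^sub>R x0 = 0" "w = v + t * c"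
      using w unfolding G'_iff by auto
    have "t = 0"
    proof (rule ccontr)
      assume "t \<noteq> 0"
      have "(- (1 / t)) *\<^sub>R (u, v) \<in> G" by (rule subspace_scale[OF sG uv])
      moreover have "t *\<^sub>R x0 = - u"
        using eq(1) by (simp add: eq_neg_iff_add_eq_0 add.commute)
      then have "- (1 / t) *\<^sub>R u = x0"
        using \<open>t \<noteq> 0\<close> by (metis scaleR_minus_left scaleR_minus_right scaleR_scaleR
            nonzero_divide_eq_eq scaleR_one)
      ultimately show False using x0 by force
    qed
    then show ?thesis
      using G uv eq unfolding dominated_graph_def by simp
  qed
  moreover have "\<forall>(a, b) \<in> G'. b \<le> p a"
  proof clarify
    fix a b assume "(a, b) \<in> G'"
    then obtain u v t where uv: "(u, v) \<in> G" and ab: "a = u + t *\<^sub>R x0" "b = v + t * c"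
      unfolding G'_iff by auto
    have "v + t * c \<le> p (u + t *\<^sub>R x0)"
    proof (cases t "0 :: real" rule: linorder_cases)
      case less
      have "(- (1 / t)) *\<^sub>R (u, v) \<in> G" by (rule subspace_scale[OF sG uv])
      then have "- (1 / t) * v - p (- (1 / t) *\<^sub>R u - x0) \<le> c" using c by simp
      then have "- t * (- (1 / t) * v - p (- (1 / t) *\<^sub>R u - x0)) \<le> - t * c"
        using less by (intro mult_left_mono) auto
      moreover have "- t * p (- (1 / t) *\<^sub>R u - x0) = p (u + t *\<^sub>R x0)"
        using hom[of "- t" "- (1 / t) *\<^sub>R u - x0"] less by (simp add: algebra_simps)
      ultimately show ?thesis using less by (simp add: algebra_simps)
    next
      case equal
      then show ?thesis using dominated_graph_le[OF G uv] by simp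
    next
      case greater
      have "(1 / t) *\<^sub>R (u, v) \<in> G" by (rule subspace_scale[OF sG uv])
      then have "c \<le> p ((1 / t) *\<^sub>R u + x0) - (1 / t) * v" using c by simp
      then have "t * c \<le> t * (p ((1 / t) *\<^sub>R u + x0) - (1 / t) * v)"
        using greater by (intro mult_left_mono) auto
      moreover have "t * p ((1 / t) *\<^sub>R u + x0) = p (u + t *\<^sub>R x0)"
        using hom[of t "(1 / t) *\<^sub>R u + x0"] greater by (simp add: algebra_simps)
      ultimately show ?thesis using greater by (simp add: algebra_simps)
    qed
    then show "b \<le> p a" using ab by simp
  qed
  ultimately have "dominated_graph p G'"
    unfolding dominated_graph_def by blast
  moreover have "G \<subseteq> G'"
    using G'_iff[of "(u, v)" for u v] by (force intro: exI[of _ 0])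
  moreover have "(x0, c) \<in> G' - G"
    using G'_iff[of "(x0, c)"] x0 subspace_0[OF sG] by (force simp: zero_prod_def)
  ultimately show ?thesis using that by blast
qed

lemma sublinear_dominates_linear_functional:
  fixes p :: "'a::real_vector \<Rightarrow> real"
  assumes sub: "\<And>x y. p (x + y) \<le> p x + p y"
    and hom: "\<And>x t. 0 < t \<Longrightarrow> p (t *\<^sub>R x) = t * p x"
  obtains g where "linear g" "\<And>x. g x \<le> p x"
proof -
  define A where "A = {G. dominated_graph p G}"
  have "p 0 = 0" using hom[of 2 0] by simp
  moreover have "subspace {(0 :: 'a, 0 :: real)}"
    by (metis subspace_single_0 zero_prod_def)
  ultimately have "{(0, 0)} \<in> A"
    unfolding A_def dominated_graph_def by auto
  moreover have "\<Union>C \<in> A" if "C \<noteq> {}" "subset.chain A C" for C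
  proof -
    have dom: "\<And>G. G \<in> C \<Longrightarrow> dominated_graph p G" and
      chain: "\<And>G G'. G \<in> C \<Longrightarrow> G' \<in> C \<Longrightarrow> G \<subseteq> G' \<or> G' \<subseteq> G"
      using that(2) unfolding A_def subset.chain_def by auto
    have sub_C: "\<And>G. G \<in> C \<Longrightarrow> subspace G" using dom by (simp add: dominated_graph_def)
    have "subspace (\<Union>C)"
      unfolding subspace_def
    proof (intro conjI ballI allI)
      show "0 \<in> \<Union>C" using that(1) sub_C subspace_0 by blast
    next
      fix a b assume "a \<in> \<Union>C" "b \<in> \<Union>C"
      then obtain G G' where "G \<in> C" "G' \<in> C" "a \<in> G" "b \<in> G'" by blast
      then show "a + b \<in> \<Union>C"
        using chain[of G G'] sub_C subspace_add by blast
    next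
      fix t a assume "a \<in> \<Union>C"
      then show "t *\<^sub>R a \<in> \<Union>C" using sub_C subspace_scale by blast
    qed
    then show ?thesis
      using dom unfolding A_def dominated_graph_def by blast
  qed
  ultimately obtain M where "M \<in> A" and max: "\<And>G. G \<in> A \<Longrightarrow> M \<subseteq> G \<Longrightarrow> G = M"
    using subset_Zorn_nonempty[of A] by blast
  then have M: "dominated_graph p M" by (simp add: A_def)
  have total: "\<exists>v. (u, v) \<in> M" for u
  proof (rule ccontr)
    assume "\<nexists>v. (u, v) \<in> M"
    then have "u \<notin> fst ` M" by force
    with dominated_graph_extend[OF sub hom M] obtain G where "dominated_graph p G" "M \<subset> G"
      by blast
    then show False using max[of G] by (auto simp: A_def)
  qed
  define g where "g u = (THE v. (u, v) \<in> M)" for u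
  have graph: "(u, v) \<in> M \<longleftrightarrow> v = g u" for u v
    using total[of u] dominated_graph_unique[OF M] unfolding g_def by (metis theI)
  have sM: "subspace M" using M by (simp add: dominated_graph_def)
  have "linear g"
  proof
    fix a b
    show "g (a + b) = g a + g b"
      using subspace_add[OF sM graph[THEN iffD2, OF refl, of a] graph[THEN iffD2, OF refl, of b]]
      by (simp add: graph)
  next
    fix t a
    show "g (t *\<^sub>R a) = t *\<^sub>R g a"
      using subspace_scale[OF sM graph[THEN iffD2, OF refl, of a], of t] by (simp add: graph)
  qed
  moreover have "g u \<le> p u" for u
    using dominated_graph_le[OF M] graph by blast
  ultimately show ?thesis using that by blast
qed

definition separation_gauge :: "'a::real_normed_vector set \<Rightarrow> real \<Rightarrow> 'a \<Rightarrow> real" where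
  "separation_gauge C \<delta> z = (INF (t, c) \<in> {0..} \<times> C. norm (z + t *\<^sub>R c) - t * \<delta>)"

context
  fixes C :: "'a::real_normed_vector set" and \<delta> :: real
  assumes convex: "convex C" and nonempty: "C \<noteq> {}" and far: "\<And>c. c \<in> C \<Longrightarrow> \<delta> \<le> norm c"
begin

lemma separation_gauge_le:
  assumes "0 \<le> t" "c \<in> C"
  shows "separation_gauge C \<delta> z \<le> norm (z + t *\<^sub>R c) - t * \<delta>"
proof -
  have "- norm z \<le> norm (z + s *\<^sub>R d) - s * \<delta>" if "0 \<le> s" "d \<in> C" for s d
  proof -
    have "s * \<delta> \<le> norm (s *\<^sub>R d)" using far[OF that(2)] that(1) by (simp add: mult_left_mono)
    also have "\<dots> \<le> norm (z + s *\<^sub>R d) + norm z" using norm_triangle_ineq4[of "z + s *\<^sub>R d" z] by simp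
    finally show ?thesis by simp
  qed
  then have "bdd_below ((\<lambda>(t, c). norm (z + t *\<^sub>R c) - t * \<delta>) ` ({0..} \<times> C))"
    by (auto intro!: bdd_belowI[where m = "- norm z"])
  then show ?thesis
    unfolding separation_gauge_def using assms by (intro cInf_lower) auto
qed

lemma separation_gauge_greatest:
  assumes "\<And>t c. 0 \<le> t \<Longrightarrow> c \<in> C \<Longrightarrow> m \<le> norm (z + t *\<^sub>R c) - t * \<delta>"
  shows "m \<le> separation_gauge C \<delta> z"
  unfolding separation_gauge_def using assms nonempty by (intro cINF_greatest) auto

lemma separation_gauge_le_norm: "separation_gauge C \<delta> z \<le> norm z"
  using separation_gauge_le[of 0] nonempty by fastforce

lemma separation_gauge_uminus: "c \<in> C \<Longrightarrow> separation_gauge C \<delta> (- c) \<le> - \<delta>"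
  using separation_gauge_le[of 1 c "- c"] by simp

lemma separation_gauge_add:
  "separation_gauge C \<delta> (a + b) \<le> separation_gauge C \<delta> a + separation_gauge C \<delta> b"
proof -
  have key: "separation_gauge C \<delta> (a + b) \<le> (norm (a + s *\<^sub>R c) - s * \<delta>) + (norm (b + t *\<^sub>R d) - t * \<delta>)"
    if "0 \<le> s" "c \<in> C" "0 \<le> t" "d \<in> C" for s t c d
  proof (cases "s + t = 0")
    case True
    then have "s = 0" "t = 0" using that by auto
    then show ?thesis
      using separation_gauge_le[of 0 c "a + b"] that norm_triangle_ineq[of a b] by simp
  next
    case False
    then have st: "0 < s + t" using that by auto
    define u where "u = (s / (s + t)) *\<^sub>R c + (t / (s + t)) *\<^sub>R d"
    have "u \<in> C"
      unfolding u_def using convex that st by (intro convexD) (auto simp: add_divide_distrib[symmetric])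
    moreover have "(s + t) *\<^sub>R u = s *\<^sub>R c + t *\<^sub>R d"
      unfolding u_def using st by (simp add: scaleR_add_right)
    ultimately show ?thesis
      using separation_gauge_le[of "s + t" u "a + b"] st
        norm_triangle_ineq[of "a + s *\<^sub>R c" "b + t *\<^sub>R d"]
      by (simp add: algebra_simps)
  qed
  have "separation_gauge C \<delta> (a + b) - (norm (a + s *\<^sub>R c) - s * \<delta>) \<le> separation_gauge C \<delta> b"
    if "0 \<le> s" "c \<in> C" for s c
    using key[OF that] by (intro separation_gauge_greatest) (simp add: algebra_simps)
  then have "separation_gauge C \<delta> (a + b) - separation_gauge C \<delta> b \<le> separation_gauge C \<delta> a"
    by (intro separation_gauge_greatest) (simp add: algebra_simps)
  then show ?thesis by simp
qed

lemma separation_gauge_scaleR_le: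
  assumes "0 < r"
  shows "separation_gauge C \<delta> (r *\<^sub>R z) \<le> r * separation_gauge C \<delta> z"
proof -
  have "separation_gauge C \<delta> (r *\<^sub>R z) / r \<le> norm (z + t *\<^sub>R c) - t * \<delta>"
    if "0 \<le> t" "c \<in> C" for t c
  proof -
    have "separation_gauge C \<delta> (r *\<^sub>R z) \<le> norm (r *\<^sub>R z + (r * t) *\<^sub>R c) - (r * t) * \<delta>"
      using separation_gauge_le[of "r * t" c] that assms by simp
    also have "\<dots> = r * (norm (z + t *\<^sub>R c) - t * \<delta>)"
    proof -
      have "norm (r *\<^sub>R z + (r * t) *\<^sub>R c) = r * norm (z + t *\<^sub>R c)"
        using assms by (metis abs_of_pos norm_scaleR scaleR_add_right scaleR_scaleR)
      then show ?thesis by (simp add: algebra_simps)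
    qed
    finally show ?thesis using assms by (simp add: divide_le_eq mult.commute)
  qed
  then have "separation_gauge C \<delta> (r *\<^sub>R z) / r \<le> separation_gauge C \<delta> z"
    by (rule separation_gauge_greatest)
  then show ?thesis using assms by (simp add: divide_le_eq mult.commute)
qed

lemma separation_gauge_scaleR:
  assumes "0 < r"
  shows "separation_gauge C \<delta> (r *\<^sub>R z) = r * separation_gauge C \<delta> z"
proof -
  have "separation_gauge C \<delta> z \<le> (1 / r) * separation_gauge C \<delta> (r *\<^sub>R z)"
    using separation_gauge_scaleR_le[of "1 / r" "r *\<^sub>R z"] assms by simp
  then show ?thesis
    using separation_gauge_scaleR_le[OF assms, of z] assms by (simp add: field_simps)
qed

lemma convex_separated_from_origin:
  obtains g where "bounded_linear g" "\<And>c. c \<in> C \<Longrightarrow> \<delta> \<le> g c"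
proof -
  obtain g where "linear g" and g: "\<And>z. g z \<le> separation_gauge C \<delta> z"
    by (rule sublinear_dominates_linear_functional[of "separation_gauge C \<delta>"])
      (auto simp: separation_gauge_add separation_gauge_scaleR)
  have "bounded_linear g"
  proof (rule bounded_linear_intro[where K = 1])
    fix z
    have "g z \<le> norm z" "- g z \<le> norm z"
      using g[of z] g[of "- z"] separation_gauge_le_norm[of z] separation_gauge_le_norm[of "- z"]
        linear_neg[OF \<open>linear g\<close>, of z] by auto
    then show "norm (g z) \<le> norm z * 1" by simp
  qed (use \<open>linear g\<close> in \<open>auto simp: linear_add linear_scale\<close>)
  moreover have "\<delta> \<le> g c" if "c \<in> C" for c
    using g[of "- c"] separation_gauge_uminus[OF that] linear_neg[OF \<open>linear g\<close>, of c] by simp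
  ultimately show ?thesis using that by blast
qed

end

lemma weakly_null_convex_combination_small:
  fixes y :: "nat \<Rightarrow> 'a::real_normed_vector"
  assumes "weakly_null y" "infinite Y" "0 < \<delta>"
  obtains L c where "finite L" "L \<subseteq> Y" "c \<in> convex hull (y ` L)" "norm c < \<delta>"
proof -
  have "\<exists>L c. finite L \<and> L \<subseteq> Y \<and> c \<in> convex hull (y ` L) \<and> norm c < \<delta>"
  proof (rule ccontr)
    assume none: "\<not> ?thesis"
    have far: "\<delta> \<le> norm c" if c: "c \<in> convex hull (y ` Y)" for c
    proof -
      obtain S u where "finite S" "S \<subseteq> y ` Y" "c = (\<Sum>v\<in>S. u v *\<^sub>R v)"
        "\<forall>v\<in>S. 0 \<le> u v" "sum u S = 1"
        using c unfolding convex_hull_explicit by blast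
      moreover obtain L where "L \<subseteq> Y" "finite L" "S = y ` L"
        using finite_subset_image[OF \<open>finite S\<close> \<open>S \<subseteq> y ` Y\<close>] by blast
      ultimately have "c \<in> convex hull (y ` L)"
        unfolding convex_hull_explicit by blast
      then show ?thesis
        using none \<open>L \<subseteq> Y\<close> \<open>finite L\<close> by (meson not_less)
    qed
    have "convex hull (y ` Y) \<noteq> {}" using \<open>infinite Y\<close> by force
    from convex_separated_from_origin[OF convex_convex_hull this far]
    obtain g where "bounded_linear g" and g: "\<And>c. c \<in> convex hull (y ` Y) \<Longrightarrow> \<delta> \<le> g c"
      by blast
    then have "(\<lambda>n. g (y n)) \<longlonglongrightarrow> 0"
      using assms(1) unfolding weakly_null_def by blast
    then obtain N where N: "\<And>n. N \<le> n \<Longrightarrow> \<bar>g (y n)\<bar> < \<delta>"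
      using \<open>0 < \<delta>\<close> unfolding lim_sequentially dist_real_def by auto
    obtain n where "n \<in> Y" "N \<le> n"
      using \<open>infinite Y\<close> by (meson infinite_nat_iff_unbounded_le)
    then have "\<bar>g (y n)\<bar> < \<delta>" and "\<delta> \<le> g (y n)"
      using N g[of "y n"] by (auto simp: hull_inc)
    then show False by linarith
  qed
  then show ?thesis using that by blast
qed

lemma nat_floor_divide_eq_imp_dist_less:
  fixes a b \<eta> :: real
  assumes "0 \<le> a" "0 \<le> b" "0 < \<eta>" "nat \<lfloor>a / \<eta>\<rfloor> = nat \<lfloor>b / \<eta>\<rfloor>"
  shows "\<bar>a - b\<bar> < \<eta>"
proof -
  have "\<lfloor>a / \<eta>\<rfloor> = \<lfloor>b / \<eta>\<rfloor>" using assms by (simp add: nat_eq_iff2)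
  then have "\<bar>a / \<eta> - b / \<eta>\<bar> < 1"
    using floor_correct[of "a / \<eta>"] floor_correct[of "b / \<eta>"] by linarith
  then have "\<bar>(a - b) / \<eta>\<bar> < 1" by (simp only: diff_divide_distrib)
  then have "\<bar>a - b\<bar> / \<eta> < 1" by (simp only: abs_div_pos[OF assms(3)])
  then show ?thesis using pos_divide_less_eq[OF assms(3)] by simp
qed

lemma Ramsey_stable_value:
  fixes \<phi> :: "'a set \<Rightarrow> real"
  assumes "infinite Z" "0 < \<eta>" and bounded: "\<And>X. X \<in> [Z]\<^bsup>r\<^esup> \<Longrightarrow> \<bar>\<phi> X\<bar> \<le> B"
  obtains Y where "Y \<subseteq> Z" "infinite Y"
    "\<And>X1 X2. X1 \<in> [Y]\<^bsup>r\<^esup> \<Longrightarrow> X2 \<in> [Y]\<^bsup>r\<^esup> \<Longrightarrow> \<bar>\<phi> X1 - \<phi> X2\<bar> < \<eta>"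
proof -
  define colour where "colour X = nat \<lfloor>(\<phi> X + B) / \<eta>\<rfloor>" for X
  have "colour X < nat \<lfloor>2 * B / \<eta>\<rfloor> + 1" if "X \<in> [Z]\<^bsup>r\<^esup>" for X
  proof -
    have "(\<phi> X + B) / \<eta> \<le> 2 * B / \<eta>"
      using bounded[OF that] \<open>0 < \<eta>\<close> by (intro divide_right_mono) (auto simp: abs_le_iff)
    then show ?thesis unfolding colour_def by (simp add: floor_mono nat_mono le_imp_less_Suc)
  qed
  then have "colour ` [Z]\<^bsup>r\<^esup> \<subseteq> {..<nat \<lfloor>2 * B / \<eta>\<rfloor> + 1}" by auto
  then obtain Y c where Y: "Y \<subseteq> Z" "infinite Y" and c: "colour ` [Y]\<^bsup>r\<^esup> \<subseteq> {c}"
    using Ramsey_nsets[OF \<open>infinite Z\<close>] by metis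
  have "\<bar>\<phi> X1 - \<phi> X2\<bar> < \<eta>" if "X1 \<in> [Y]\<^bsup>r\<^esup>" "X2 \<in> [Y]\<^bsup>r\<^esup>" for X1 X2
  proof -
    have "X1 \<in> [Z]\<^bsup>r\<^esup>" "X2 \<in> [Z]\<^bsup>r\<^esup>" using that nsets_mono[OF Y(1)] by auto
    then have "0 \<le> \<phi> X1 + B" "0 \<le> \<phi> X2 + B"
      using bounded by (fastforce simp: abs_le_iff)+
    moreover have "colour X1 = colour X2" using c that by blast
    ultimately have "\<bar>(\<phi> X1 + B) - (\<phi> X2 + B)\<bar> < \<eta>"
      unfolding colour_def using \<open>0 < \<eta>\<close> by (intro nat_floor_divide_eq_imp_dist_less)
    then show ?thesis by simp
  qed
  with Y that show ?thesis by blast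
qed

lemma Ramsey_stable_values:
  fixes \<phi> :: "'l \<Rightarrow> 'a set \<Rightarrow> real" and size :: "'l \<Rightarrow> nat"
  assumes "finite \<Lambda>" "infinite Z" "0 < \<eta>"
    and bounded: "\<And>l X. l \<in> \<Lambda> \<Longrightarrow> X \<in> [Z]\<^bsup>size l\<^esup> \<Longrightarrow> \<bar>\<phi> l X\<bar> \<le> B"
  shows "\<exists>Y \<subseteq> Z. infinite Y \<and> (\<forall>l\<in>\<Lambda>. \<forall>X1\<in>[Y]\<^bsup>size l\<^esup>. \<forall>X2\<in>[Y]\<^bsup>size l\<^esup>. \<bar>\<phi> l X1 - \<phi> l X2\<bar> < \<eta>)"
  using \<open>finite \<Lambda>\<close> \<open>infinite Z\<close> bounded
proof (induction \<Lambda> arbitrary: Z rule: finite_induct)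
  case empty
  then show ?case by blast
next
  case (insert l \<Lambda>)
  obtain Y1 where Y1: "Y1 \<subseteq> Z" "infinite Y1"
    and stable: "\<And>X1 X2. X1 \<in> [Y1]\<^bsup>size l\<^esup> \<Longrightarrow> X2 \<in> [Y1]\<^bsup>size l\<^esup> \<Longrightarrow> \<bar>\<phi> l X1 - \<phi> l X2\<bar> < \<eta>"
    using Ramsey_stable_value[OF \<open>infinite Z\<close> \<open>0 < \<eta>\<close>, of "size l" "\<phi> l" B] insert.prems(2)
    by blast
  have "\<And>l' X. l' \<in> \<Lambda> \<Longrightarrow> X \<in> [Y1]\<^bsup>size l'\<^esup> \<Longrightarrow> \<bar>\<phi> l' X\<bar> \<le> B"
    using insert.prems(2) nsets_mono[OF Y1(1)] by blast
  then obtain Y where Y: "Y \<subseteq> Y1" "infinite Y"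
    and "\<forall>l\<in>\<Lambda>. \<forall>X1\<in>[Y]\<^bsup>size l\<^esup>. \<forall>X2\<in>[Y]\<^bsup>size l\<^esup>. \<bar>\<phi> l X1 - \<phi> l X2\<bar> < \<eta>"
    using insert.IH[OF Y1(2)] by blast
  moreover have "\<forall>X1\<in>[Y]\<^bsup>size l\<^esup>. \<forall>X2\<in>[Y]\<^bsup>size l\<^esup>. \<bar>\<phi> l X1 - \<phi> l X2\<bar> < \<eta>"
    using stable nsets_mono[OF Y(1)] by blast
  ultimately show ?case
    using Y1(1) by (intro exI[of _ Y]) auto
qed

definition pattern_sum ::
  "(nat \<Rightarrow> nat \<Rightarrow> 'a::real_normed_vector) \<Rightarrow> (nat \<Rightarrow> nat) \<Rightarrow> (nat \<Rightarrow> real) \<Rightarrow> nat set \<Rightarrow> 'a" where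
  "pattern_sum x \<rho> \<sigma> X = (\<Sum>i<card X. \<sigma> i *\<^sub>R x (\<rho> i) (sorted_list_of_set X ! i))"

definition patterns_stable :: "(nat \<Rightarrow> nat \<Rightarrow> 'a::real_normed_vector) \<Rightarrow> nat \<Rightarrow> real \<Rightarrow> nat set \<Rightarrow> bool" where
  "patterns_stable x k \<eta> Y \<longleftrightarrow>
     (\<forall>r \<le> 2 * k. \<forall>\<rho> \<sigma>. (\<forall>i<r. \<rho> i < k \<and> \<sigma> i \<in> {-1, 1}) \<longrightarrow>
        (\<forall>X1\<in>[Y]\<^bsup>r\<^esup>. \<forall>X2\<in>[Y]\<^bsup>r\<^esup>.
           \<bar>norm (pattern_sum x \<rho> \<sigma> X1) - norm (pattern_sum x \<rho> \<sigma> X2)\<bar> < \<eta>))"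

lemma patterns_stableD:
  assumes "patterns_stable x k \<eta> Y" "r \<le> 2 * k" "\<forall>i<r. \<rho> i < k \<and> \<sigma> i \<in> {-1, 1}"
    "X1 \<in> [Y]\<^bsup>r\<^esup>" "X2 \<in> [Y]\<^bsup>r\<^esup>"
  shows "\<bar>norm (pattern_sum x \<rho> \<sigma> X1) - norm (pattern_sum x \<rho> \<sigma> X2)\<bar> < \<eta>"
  using assms unfolding patterns_stable_def by blast

lemma pattern_sum_cong:
  "(\<And>i. i < card X \<Longrightarrow> \<rho> i = \<rho>' i \<and> \<sigma> i = \<sigma>' i) \<Longrightarrow> pattern_sum x \<rho> \<sigma> X = pattern_sum x \<rho>' \<sigma>' X"
  unfolding pattern_sum_def by (rule sum.cong) auto

lemma norm_pattern_sum_le: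
  assumes "\<And>i j. norm (x i j) \<le> 1" "\<And>i. i < card X \<Longrightarrow> \<bar>\<sigma> i\<bar> \<le> 1"
  shows "norm (pattern_sum x \<rho> \<sigma> X) \<le> card X"
proof -
  have "norm (pattern_sum x \<rho> \<sigma> X) \<le> (\<Sum>i<card X. norm (\<sigma> i *\<^sub>R x (\<rho> i) (sorted_list_of_set X ! i)))"
    unfolding pattern_sum_def by (rule norm_sum)
  also have "\<dots> \<le> (\<Sum>i<card X. 1)"
    using assms by (intro sum_mono) (simp add: mult_le_one del: norm_scaleR add: norm_scaleR)
  finally show ?thesis by simp
qed

lemma exists_patterns_stable:
  assumes "\<And>i j. norm (x i j) \<le> 1" "infinite Z" "0 < \<eta>"
  obtains Y where "Y \<subseteq> Z" "infinite Y" "patterns_stable x k \<eta> Y"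
proof -
  define \<Lambda> where "\<Lambda> = (SIGMA r:{..2 * k}. ({..<r} \<rightarrow>\<^sub>E {..<k}) \<times> ({..<r} \<rightarrow>\<^sub>E {-1, 1 :: real}))"
  have "finite \<Lambda>"
    unfolding \<Lambda>_def by (intro finite_SigmaI finite_cartesian_product finite_PiE) auto
  define \<phi> :: "nat \<times> (nat \<Rightarrow> nat) \<times> (nat \<Rightarrow> real) \<Rightarrow> nat set \<Rightarrow> real"
    where "\<phi> l X = norm (pattern_sum x (fst (snd l)) (snd (snd l)) X)" for l X
  have bound: "\<bar>\<phi> l X\<bar> \<le> 2 * k" if l: "l \<in> \<Lambda>" and X: "X \<in> [Z]\<^bsup>fst l\<^esup>" for l X
  proof -
    obtain r \<rho> \<sigma> where l_eq: "l = (r, \<rho>, \<sigma>)" by (cases l)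
    then have r: "r \<le> 2 * k" and \<sigma>: "\<sigma> \<in> {..<r} \<rightarrow>\<^sub>E {-1, 1}" and X: "X \<in> [Z]\<^bsup>r\<^esup>"
      using l X by (simp_all add: \<Lambda>_def)
    have "\<bar>\<sigma> i\<bar> \<le> 1" if "i < card X" for i
    proof -
      have "\<sigma> i \<in> {-1, 1}" using PiE_mem[OF \<sigma>, of i] that X by (simp add: nsets_def)
      then show ?thesis by auto
    qed
    then have "norm (pattern_sum x \<rho> \<sigma> X) \<le> card X"
      by (rule norm_pattern_sum_le[OF assms(1)])
    then show ?thesis using r X by (simp add: \<phi>_def l_eq nsets_def)
  qed
  have "\<exists>Y\<subseteq>Z. infinite Y \<and>
      (\<forall>l\<in>\<Lambda>. \<forall>X1\<in>[Y]\<^bsup>fst l\<^esup>. \<forall>X2\<in>[Y]\<^bsup>fst l\<^esup>. \<bar>\<phi> l X1 - \<phi> l X2\<bar> < \<eta>)"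
    by (rule Ramsey_stable_values[OF \<open>finite \<Lambda>\<close> assms(2,3)]) (rule bound)
  then obtain Y where Y: "Y \<subseteq> Z" "infinite Y" and
    stable: "\<forall>l\<in>\<Lambda>. \<forall>X1\<in>[Y]\<^bsup>fst l\<^esup>. \<forall>X2\<in>[Y]\<^bsup>fst l\<^esup>. \<bar>\<phi> l X1 - \<phi> l X2\<bar> < \<eta>"
    by blast
  have "patterns_stable x k \<eta> Y"
    unfolding patterns_stable_def
  proof (intro allI impI ballI)
    fix r \<rho> and \<sigma> :: "nat \<Rightarrow> real" and X1 X2
    assume r: "r \<le> 2 * k" and \<rho>\<sigma>: "\<forall>i<r. \<rho> i < k \<and> \<sigma> i \<in> {-1, 1}"
      and X: "X1 \<in> [Y]\<^bsup>r\<^esup>" "X2 \<in> [Y]\<^bsup>r\<^esup>"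
    have l: "(r, restrict \<rho> {..<r}, restrict \<sigma> {..<r}) \<in> \<Lambda>"
      using r \<rho>\<sigma> by (auto simp: \<Lambda>_def)
    have eq: "pattern_sum x (restrict \<rho> {..<r}) (restrict \<sigma> {..<r}) X = pattern_sum x \<rho> \<sigma> X"
      if "X \<in> [Y]\<^bsup>r\<^esup>" for X
      using that by (intro pattern_sum_cong) (simp add: nsets_def)
    have "\<forall>X1\<in>[Y]\<^bsup>r\<^esup>. \<forall>X2\<in>[Y]\<^bsup>r\<^esup>.
        \<bar>\<phi> (r, restrict \<rho> {..<r}, restrict \<sigma> {..<r}) X1 - \<phi> (r, restrict \<rho> {..<r}, restrict \<sigma> {..<r}) X2\<bar> < \<eta>"
      using bspec[OF stable l] by simp
    then have "\<bar>\<phi> (r, restrict \<rho> {..<r}, restrict \<sigma> {..<r}) X1 - \<phi> (r, restrict \<rho> {..<r}, restrict \<sigma> {..<r}) X2\<bar> < \<eta>"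
      using X by blast
    then show "\<bar>norm (pattern_sum x \<rho> \<sigma> X1) - norm (pattern_sum x \<rho> \<sigma> X2)\<bar> < \<eta>"
      using eq[OF X(1)] eq[OF X(2)] by (simp add: \<phi>_def)
  qed
  with Y that show ?thesis by blast
qed

lemma sorted_list_of_set_strict_mono_image:
  fixes t :: "nat \<Rightarrow> nat"
  assumes "\<And>i j. i < j \<Longrightarrow> j < r \<Longrightarrow> t i < t j"
  shows "sorted_list_of_set (t ` {..<r}) = map t [0..<r]" and "card (t ` {..<r}) = r"
proof -
  have "inj_on t {..<r}" by (rule inj_onI) (metis assms lessThan_iff nat_neq_iff)
  then show card: "card (t ` {..<r}) = r" by (simp add: card_image)
  have "sorted_wrt (<) (map t [0..<r])" unfolding sorted_wrt_iff_nth_less using assms by auto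
  moreover have "set (map t [0..<r]) = t ` {..<r}" by auto
  moreover have "length (map t [0..<r]) = card (t ` {..<r})" using card by simp
  ultimately show "sorted_list_of_set (t ` {..<r}) = map t [0..<r]"
    using sorted_list_of_set_unique[of "t ` {..<r}"] by blast
qed

lemma pattern_sum_strict_mono_image:
  assumes "\<And>i j. i < j \<Longrightarrow> j < r \<Longrightarrow> t i < t j"
  shows "pattern_sum x \<rho> \<sigma> (t ` {..<r}) = (\<Sum>i<r. \<sigma> i *\<^sub>R x (\<rho> i) (t i))"
  using sorted_list_of_set_strict_mono_image[OF assms] unfolding pattern_sum_def by simp

lemma pattern_sum_of_labelled_set:
  assumes "finite T"
  shows "pattern_sum x (\<lambda>i. \<rho> (sorted_list_of_set T ! i)) (\<lambda>i. \<sigma> (sorted_list_of_set T ! i)) T =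
    (\<Sum>c\<in>T. \<sigma> c *\<^sub>R x (\<rho> c) c)"
proof -
  let ?xs = "sorted_list_of_set T"
  have "pattern_sum x (\<lambda>i. \<rho> (?xs ! i)) (\<lambda>i. \<sigma> (?xs ! i)) T =
      sum_list (map (\<lambda>c. \<sigma> c *\<^sub>R x (\<rho> c) c) ?xs)"
    unfolding pattern_sum_def sum_list_sum_nth using assms by (simp add: atLeast0LessThan)
  also have "\<dots> = (\<Sum>c\<in>T. \<sigma> c *\<^sub>R x (\<rho> c) c)"
    using assms by (simp add: sum_list_distinct_conv_sum_set)
  finally show ?thesis .
qed

lemma strict_mono_add_le:
  fixes y :: "nat \<Rightarrow> nat"
  assumes "strict_mono y"
  shows "y a + d \<le> y (a + d)"
proof (induction d)
  case (Suc d)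
  have "y (a + d) < y (a + Suc d)" using assms by (simp add: strict_mono_def)
  with Suc show ?case by simp
qed simp

lemma spread_extends_to_strict_mono:
  fixes s :: "nat \<Rightarrow> nat"
  assumes "finite F" and above: "\<forall>j\<in>F. n + j \<le> s j"
    and spread: "\<forall>j\<in>F. \<forall>j'\<in>F. j < j' \<longrightarrow> s j + (j' - j) \<le> s j'"
  obtains t where "strict_mono t" "n \<le> t 0" "\<forall>j\<in>F. t j = s j"
proof -
  define S where "S i = insert (n + i) ((\<lambda>j. s j + (i - j)) ` {j\<in>F. j \<le> i})" for i
  define t where "t i = Max (S i)" for i
  have fin: "finite (S i)" for i unfolding S_def using \<open>finite F\<close> by simp
  have t_in: "t i \<in> S i" for i unfolding t_def using fin by (rule Max_in) (simp add: S_def)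
  have t_ge: "m \<le> t i" if "m \<in> S i" for m i unfolding t_def using fin that by (rule Max_ge)
  have shift: "m + (i' - i) \<in> S i'" if "m \<in> S i" "i \<le> i'" for m i i'
  proof -
    from that(1) consider "m = n + i" | j where "j \<in> F" "j \<le> i" "m = s j + (i - j)"
      unfolding S_def by blast
    then show ?thesis
    proof cases
      case 1
      then show ?thesis using that(2) by (simp add: S_def)
    next
      case 2
      then have "m + (i' - i) = s j + (i' - j)" using that(2) by simp
      then show ?thesis using 2 that(2) unfolding S_def by auto
    qed
  qed
  have "t i < t i'" if "i < i'" for i i'
  proof -
    have "t i + (i' - i) \<le> t i'" using that by (intro t_ge shift t_in) simp
    then show ?thesis using that by simp
  qed
  then have "strict_mono t" by (rule strict_monoI)
  moreover have "n \<le> t 0" using t_ge[of "n + 0" 0] by (simp add: S_def)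
  moreover have "t j = s j" if "j \<in> F" for j
  proof -
    have "s j \<in> S j" unfolding S_def using that by (auto intro!: image_eqI[where x = j])
    moreover have "m \<le> s j" if "m \<in> S j" for m
    proof -
      from that consider "m = n + j" | j' where "j' \<in> F" "j' \<le> j" "m = s j' + (j - j')"
        unfolding S_def by blast
      then show ?thesis
      proof cases
        case 1
        then show ?thesis using above \<open>j \<in> F\<close> by simp
      next
        case 2
        then show ?thesis using spread \<open>j \<in> F\<close> by (cases "j' = j") auto
      qed
    qed
    ultimately show ?thesis unfolding t_def using fin by (intro Max_eqI) auto
  qed
  ultimately show ?thesis using that by blast
qed

lemma separated_blocks_exist:
  fixes P :: "nat \<Rightarrow> nat set \<Rightarrow> 'c \<Rightarrow> bool"
  assumes "\<And>i b. i < r \<Longrightarrow> \<exists>L c. finite L \<and> L \<subseteq> {b..} \<and> P i L c"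
  shows "\<exists>L c. (\<forall>i<r. finite (L i) \<and> P i (L i) (c i)) \<and>
    (\<forall>i i' l l'. i < i' \<and> i' < r \<and> l \<in> L i \<and> l' \<in> L i' \<longrightarrow> l + g < l')"
  using assms
proof (induction r)
  case 0
  then show ?case by auto
next
  case (Suc r)
  then obtain L c where L: "\<forall>i<r. finite (L i) \<and> P i (L i) (c i)"
    and sep: "\<forall>i i' l l'. i < i' \<and> i' < r \<and> l \<in> L i \<and> l' \<in> L i' \<longrightarrow> l + g < l'"
    by (metis less_SucI)
  define b where "b = Suc (Max (insert 0 (\<Union>i<r. L i))) + g"
  obtain L' c' where L': "finite L'" "L' \<subseteq> {b..}" "P r L' c'"
    using Suc.prems[of r b] by blast
  have "l + g < l'" if "i < r" "l \<in> L i" "l' \<in> L'" for i l l'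
  proof -
    have "l \<le> Max (insert 0 (\<Union>i<r. L i))" using L that by (intro Max_ge) auto
    then show ?thesis using L'(2) that(3) unfolding b_def by auto
  qed
  then show ?case
    using L L' sep by (intro exI[of _ "L(r := L')"] exI[of _ "c(r := c')"]) (auto simp: less_Suc_eq)
qed

lemma sum_in_convex_hull_of_choices:
  fixes V :: "nat \<Rightarrow> 'c \<Rightarrow> 'a::real_vector"
  assumes "\<forall>i<r. c i \<in> convex hull (V i ` L i)"
  shows "(\<Sum>i<r. c i) \<in> convex hull {\<Sum>i<r. V i (ch i) | ch. \<forall>i<r. ch i \<in> L i}"
  using assms
proof (induction r)
  case 0
  then show ?case by (simp add: hull_inc)
next
  case (Suc r)
  let ?A = "{\<Sum>i<r. V i (ch i) | ch. \<forall>i<r. ch i \<in> L i}"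
  have "(\<Sum>i<Suc r. c i) \<in> convex hull ?A + convex hull (V r ` L r)"
    using Suc by (simp add: set_plus_intro)
  also have "\<dots> = convex hull (?A + V r ` L r)"
    by (rule convex_hull_set_plus[symmetric])
  also have "\<dots> \<subseteq> convex hull {\<Sum>i<Suc r. V i (ch i) | ch. \<forall>i<Suc r. ch i \<in> L i}"
  proof (rule hull_mono, rule subsetI)
    fix v assume "v \<in> ?A + V r ` L r"
    then obtain ch l where ch: "\<forall>i<r. ch i \<in> L i" and "l \<in> L r"
      and v: "v = (\<Sum>i<r. V i (ch i)) + V r l"
      by (auto simp: set_plus_def)
    then have "\<forall>i<Suc r. (ch(r := l)) i \<in> L i" by (simp add: less_Suc_eq)
    moreover have "v = (\<Sum>i<Suc r. V i ((ch(r := l)) i))" unfolding v by simp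
    ultimately show "v \<in> {\<Sum>i<Suc r. V i (ch i) | ch. \<forall>i<Suc r. ch i \<in> L i}" by blast
  qed
  finally show ?case .
qed

lemma norm_sum_in_convex_hulls_le:
  fixes V :: "nat \<Rightarrow> 'c \<Rightarrow> 'a::real_normed_vector"
  assumes "\<forall>i<r. c i \<in> convex hull (V i ` L i)"
    and "\<And>ch. \<forall>i<r. ch i \<in> L i \<Longrightarrow> norm (\<Sum>i<r. V i (ch i)) \<le> B"
  shows "norm (\<Sum>i<r. c i) \<le> B"
proof -
  have "{\<Sum>i<r. V i (ch i) | ch. \<forall>i<r. ch i \<in> L i} \<subseteq> cball 0 B"
    using assms(2) by auto
  then have "convex hull {\<Sum>i<r. V i (ch i) | ch. \<forall>i<r. ch i \<in> L i} \<subseteq> cball 0 B"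
    by (intro hull_minimal) auto
  then show ?thesis using sum_in_convex_hull_of_choices[OF assms(1)] by auto
qed

locale asymptotic_estimate =
  fixes x :: "nat \<Rightarrow> nat \<Rightarrow> 'a::real_normed_vector"
    and e :: "nat \<Rightarrow> 'b::real_normed_vector"
    and err :: "nat \<Rightarrow> real"
  assumes estimate: "\<And>n a kk. \<forall>i<n. -1 \<le> a i \<and> a i \<le> 1 \<Longrightarrow> (0 < n \<longrightarrow> n \<le> kk 0) \<Longrightarrow>
    \<forall>i j. i < j \<and> j < n \<longrightarrow> kk i < kk j \<Longrightarrow>
    \<bar>norm (\<Sum>i<n. a i *\<^sub>R x i (kk i)) - norm (\<Sum>i<n. a i *\<^sub>R e i)\<bar> < err n"
begin

lemma err_pos: "0 < err n"
  using estimate[of n "\<lambda>_. 0" "\<lambda>i. n + i"] by simp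

lemma strict_mono_sum_estimate:
  assumes "F \<subseteq> {..<n}" "strict_mono t" "n \<le> t 0"
  shows "\<bar>norm (\<Sum>j\<in>F. x j (t j)) - norm (\<Sum>j\<in>F. e j)\<bar> < err n"
proof -
  define a :: "nat \<Rightarrow> real" where "a i = (if i \<in> F then 1 else 0)" for i
  have "\<bar>norm (\<Sum>i<n. a i *\<^sub>R x i (t i)) - norm (\<Sum>i<n. a i *\<^sub>R e i)\<bar> < err n"
    using assms(2,3) by (intro estimate) (auto simp: a_def strict_mono_def)
  moreover have "(\<Sum>i<n. a i *\<^sub>R x i (t i)) = (\<Sum>j\<in>F. x j (t j))"
    "(\<Sum>i<n. a i *\<^sub>R e i) = (\<Sum>j\<in>F. e j)"
    using assms(1) by (auto simp: a_def intro!: sum.mono_neutral_cong_right)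
  ultimately show ?thesis by simp
qed

lemma spread_sum_estimate:
  assumes "F \<subseteq> {..<n}" "\<forall>j\<in>F. n + j \<le> s j" "\<forall>j\<in>F. \<forall>j'\<in>F. j < j' \<longrightarrow> s j + (j' - j) \<le> s j'"
  shows "\<bar>norm (\<Sum>j\<in>F. x j (s j)) - norm (\<Sum>j\<in>F. e j)\<bar> < err n"
proof -
  have "finite F" using assms(1) finite_subset by blast
  then obtain t where "strict_mono t" "n \<le> t 0" and t: "\<forall>j\<in>F. t j = s j"
    using spread_extends_to_strict_mono assms(2,3) by blast
  then have "\<bar>norm (\<Sum>j\<in>F. x j (t j)) - norm (\<Sum>j\<in>F. e j)\<bar> < err n"
    using assms(1) by (intro strict_mono_sum_estimate)
  moreover have "(\<Sum>j\<in>F. x j (t j)) = (\<Sum>j\<in>F. x j (s j))" using t by simp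
  ultimately show ?thesis by simp
qed

lemma separated_sum_estimate:
  fixes K :: "nat set" and \<rho> p :: "nat \<Rightarrow> nat"
  assumes "\<forall>i\<in>K. \<rho> i < k" "k \<le> n"
    and mono: "\<And>i i'. i \<in> K \<Longrightarrow> i' \<in> K \<Longrightarrow> i < i' \<Longrightarrow> \<rho> i < \<rho> i'"
    and pos: "\<forall>i\<in>K. n + k \<le> p i" and sep: "\<And>i i'. i \<in> K \<Longrightarrow> i' \<in> K \<Longrightarrow> i < i' \<Longrightarrow> p i + k < p i'"
  shows "norm (\<Sum>j\<in>\<rho> ` K. e j) < norm (\<Sum>i\<in>K. x (\<rho> i) (p i)) + err n"
proof -
  have inj: "inj_on \<rho> K"
  proof (rule inj_onI)
    fix i i' assume "i \<in> K" "i' \<in> K" "\<rho> i = \<rho> i'"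
    then show "i = i'" using mono[of i i'] mono[of i' i] by (cases i i' rule: linorder_cases) auto
  qed
  define s where "s j = p (inv_into K \<rho> j)" for j
  have s: "s (\<rho> i) = p i" if "i \<in> K" for i
    unfolding s_def using inj that by simp
  have "\<forall>j\<in>\<rho> ` K. n + j \<le> s j"
    using pos assms(1) s by fastforce
  moreover have "s j + (j' - j) \<le> s j'"
    if j: "j \<in> \<rho> ` K" "j' \<in> \<rho> ` K" "j < j'" for j j'
  proof -
    obtain i i' where i: "i \<in> K" "j = \<rho> i" and i': "i' \<in> K" "j' = \<rho> i'"
      using j by blast
    have "i < i'"
      using mono[of i' i] i i' j(3) by (cases i i' rule: linorder_cases) auto
    then have "p i + k < p i'" using sep i i' by blast
    moreover have "j' < k" using assms(1) i' by blast
    ultimately show ?thesis using i i' s by simp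
  qed
  moreover have "\<rho> ` K \<subseteq> {..<n}" using assms(1,2) by auto
  ultimately have "\<bar>norm (\<Sum>j\<in>\<rho> ` K. x j (s j)) - norm (\<Sum>j\<in>\<rho> ` K. e j)\<bar> < err n"
    by (intro spread_sum_estimate) auto
  moreover have "(\<Sum>j\<in>\<rho> ` K. x j (s j)) = (\<Sum>i\<in>K. x (\<rho> i) (p i))"
    using s by (simp add: sum.reindex[OF inj])
  ultimately show ?thesis by simp
qed

end

locale normalized_asymptotic_estimate = asymptotic_estimate +
  assumes array: "normalized_weakly_null_array x"
begin

lemma norm_x [simp]: "norm (x i j) = 1"
  using array by (simp add: normalized_weakly_null_array_def)

lemma weakly_null_row: "weakly_null (x i)"
  using array by (simp add: normalized_weakly_null_array_def)

lemma block_exists: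
  assumes "infinite Y" "0 < \<delta>"
  shows "\<exists>L c. finite L \<and> L \<subseteq> {b..} \<and> L \<subseteq> Y \<and> c \<in> convex hull (x i ` L) \<and>
    (s \<longrightarrow> (\<exists>l. L = {l})) \<and> (\<not> s \<longrightarrow> norm c < \<delta>)"
proof -
  have "Y \<subseteq> (Y \<inter> {b..}) \<union> {..<b}" by auto
  then have Yb: "infinite (Y \<inter> {b..})"
    using assms(1) finite_subset by auto
  show ?thesis
  proof (cases s)
    case True
    obtain l where "l \<in> Y \<inter> {b..}" using infinite_imp_nonempty[OF Yb] by blast
    then show ?thesis using True by (intro exI[of _ "{l}"] exI[of _ "x i l"]) auto
  next
    case False
    obtain L c where "finite L" "L \<subseteq> Y \<inter> {b..}" "c \<in> convex hull (x i ` L)" "norm c < \<delta>"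
      using weakly_null_convex_combination_small[OF weakly_null_row Yb assms(2)] by blast
    then show ?thesis using False by blast
  qed
qed

lemma block_lower_estimate:
  fixes \<rho> :: "nat \<Rightarrow> nat" and \<sigma> :: "nat \<Rightarrow> real" and \<delta> B :: real
  assumes Y: "infinite Y" "Y \<subseteq> {n + k..}" and "k \<le> n" "0 < \<delta>"
    and bound: "\<And>X. X \<in> [Y]\<^bsup>r\<^esup> \<Longrightarrow> norm (pattern_sum x \<rho> \<sigma> X) \<le> B"
    and rows: "\<forall>i<r. \<rho> i < k" and signs: "\<forall>i<r. \<bar>\<sigma> i\<bar> \<le> 1"
    and mono: "\<And>i i'. i < i' \<Longrightarrow> i' < r \<Longrightarrow> \<sigma> i = 1 \<Longrightarrow> \<sigma> i' = 1 \<Longrightarrow> \<rho> i < \<rho> i'"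
  shows "norm (\<Sum>j\<in>\<rho> ` {i. i < r \<and> \<sigma> i = 1}. e j) \<le> B + r * \<delta> + err n"
proof -
  define K where "K = {i. i < r \<and> \<sigma> i = 1}"
  define good where "good i L c \<longleftrightarrow> L \<subseteq> Y \<and> c \<in> convex hull (x (\<rho> i) ` L) \<and>
    (\<sigma> i = 1 \<longrightarrow> (\<exists>l. L = {l})) \<and> (\<sigma> i \<noteq> 1 \<longrightarrow> norm c < \<delta>)" for i L c
  have "\<exists>L c. finite L \<and> L \<subseteq> {b..} \<and> good i L c" for i b
    using block_exists[OF Y(1) \<open>0 < \<delta>\<close>, where b = b and i = "\<rho> i" and s = "\<sigma> i = 1"]
    unfolding good_def by simp
  then have "\<exists>L c. (\<forall>i<r. finite (L i) \<and> good i (L i) (c i)) \<and>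
      (\<forall>i i' l l'. i < i' \<and> i' < r \<and> l \<in> L i \<and> l' \<in> L i' \<longrightarrow> l + k < l')"
    by (intro separated_blocks_exist)
  then obtain L c where good: "\<forall>i<r. finite (L i) \<and> good i (L i) (c i)"
    and sep: "\<forall>i i' l l'. i < i' \<and> i' < r \<and> l \<in> L i \<and> l' \<in> L i' \<longrightarrow> l + k < l'"
    by blast
  have good_i: "L i \<subseteq> Y \<and> c i \<in> convex hull (x (\<rho> i) ` L i) \<and>
      (\<sigma> i = 1 \<longrightarrow> (\<exists>l. L i = {l})) \<and> (\<sigma> i \<noteq> 1 \<longrightarrow> norm (c i) < \<delta>)" if "i < r" for i
    using good that unfolding good_def by simp
  then have L: "i < r \<Longrightarrow> L i \<subseteq> Y" and c: "i < r \<Longrightarrow> c i \<in> convex hull (x (\<rho> i) ` L i)"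
    and single: "i < r \<Longrightarrow> \<sigma> i = 1 \<Longrightarrow> \<exists>l. L i = {l}"
    and small: "i < r \<Longrightarrow> \<sigma> i \<noteq> 1 \<Longrightarrow> norm (c i) < \<delta>" for i
    by simp_all
  have choices: "norm (\<Sum>i<r. \<sigma> i *\<^sub>R x (\<rho> i) (ch i)) \<le> B" if ch: "\<forall>i<r. ch i \<in> L i" for ch
  proof -
    have "ch i < ch j" if "i < j" "j < r" for i j
    proof -
      have "ch i + k < ch j" using sep[rule_format, of i j "ch i" "ch j"] ch that by simp
      then show ?thesis by simp
    qed
    then have "pattern_sum x \<rho> \<sigma> (ch ` {..<r}) = (\<Sum>i<r. \<sigma> i *\<^sub>R x (\<rho> i) (ch i))"
      and "card (ch ` {..<r}) = r"
      by (simp_all add: pattern_sum_strict_mono_image sorted_list_of_set_strict_mono_image)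
    moreover have "ch ` {..<r} \<subseteq> Y" using ch L by blast
    ultimately show ?thesis using bound[of "ch ` {..<r}"] by (simp add: nsets_def)
  qed
  have "\<sigma> i *\<^sub>R c i \<in> convex hull ((\<lambda>l. \<sigma> i *\<^sub>R x (\<rho> i) l) ` L i)" if "i < r" for i
  proof -
    have "\<sigma> i *\<^sub>R c i \<in> (*\<^sub>R) (\<sigma> i) ` (convex hull (x (\<rho> i) ` L i))"
      using c[OF that] by blast
    then show ?thesis by (simp only: convex_hull_scaling[symmetric] image_image)
  qed
  then have avg: "norm (\<Sum>i<r. \<sigma> i *\<^sub>R c i) \<le> B"
    using choices by (intro norm_sum_in_convex_hulls_le[where c = "\<lambda>i. \<sigma> i *\<^sub>R c i"]) auto
  have K: "i < r" "\<sigma> i = 1" if "i \<in> K" for i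
    using that unfolding K_def by blast+
  define p where "p i = the_elem (L i)" for i
  have Lp: "L i = {p i}" if iK: "i \<in> K" for i
  proof -
    obtain l where "L i = {l}" using single[OF K[OF iK]] by blast
    then show ?thesis unfolding p_def by simp
  qed
  have cK: "\<sigma> i *\<^sub>R c i = x (\<rho> i) (p i)" if "i \<in> K" for i
  proof -
    have "c i \<in> convex hull {x (\<rho> i) (p i)}"
      using c[OF K(1)[OF that]] unfolding Lp[OF that] by simp
    then show ?thesis using K(2)[OF that] by simp
  qed
  have "(\<Sum>i<r. \<sigma> i *\<^sub>R c i) = (\<Sum>i\<in>K. \<sigma> i *\<^sub>R c i) + (\<Sum>i\<in>{..<r} - K. \<sigma> i *\<^sub>R c i)"
    using K(1) by (subst sum.subset_diff[of K "{..<r}"]) auto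
  also have "(\<Sum>i\<in>K. \<sigma> i *\<^sub>R c i) = (\<Sum>i\<in>K. x (\<rho> i) (p i))"
    using cK by simp
  finally have split: "(\<Sum>i<r. \<sigma> i *\<^sub>R c i) =
      (\<Sum>i\<in>K. x (\<rho> i) (p i)) + (\<Sum>i\<in>{..<r} - K. \<sigma> i *\<^sub>R c i)" .
  have "norm (\<Sum>i\<in>{..<r} - K. \<sigma> i *\<^sub>R c i) \<le> (\<Sum>i\<in>{..<r} - K. \<delta>)"
  proof (rule order_trans[OF norm_sum sum_mono])
    fix i assume i: "i \<in> {..<r} - K"
    then have "\<bar>\<sigma> i\<bar> \<le> 1" "norm (c i) \<le> \<delta>"
      using signs small[of i] by (auto simp: K_def)
    then have "\<bar>\<sigma> i\<bar> * norm (c i) \<le> 1 * \<delta>" by (intro mult_mono) auto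
    then show "norm (\<sigma> i *\<^sub>R c i) \<le> \<delta>" by simp
  qed
  also have "\<dots> \<le> r * \<delta>"
  proof -
    have "card ({..<r} - K) \<le> r" using card_mono[of "{..<r}" "{..<r} - K"] by auto
    then show ?thesis using \<open>0 < \<delta>\<close> by (simp add: mult_right_mono)
  qed
  finally have "norm (\<Sum>i\<in>K. x (\<rho> i) (p i)) \<le> B + r * \<delta>"
    using avg split norm_triangle_ineq4[of "\<Sum>i<r. \<sigma> i *\<^sub>R c i" "\<Sum>i\<in>{..<r} - K. \<sigma> i *\<^sub>R c i"]
    by simp
  moreover have "norm (\<Sum>j\<in>\<rho> ` K. e j) < norm (\<Sum>i\<in>K. x (\<rho> i) (p i)) + err n"
  proof (rule separated_sum_estimate)
    show "\<forall>i\<in>K. \<rho> i < k" using rows K(1) by blast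
    show "\<forall>i\<in>K. n + k \<le> p i"
    proof
      fix i assume "i \<in> K"
      then have "p i \<in> Y" using L[OF K(1)] Lp by blast
      then show "n + k \<le> p i" using Y(2) by auto
    qed
    show "\<rho> i < \<rho> i'" if "i \<in> K" "i' \<in> K" "i < i'" for i i'
      using mono[of i i'] K that by blast
    show "p i + k < p i'" if "i \<in> K" "i' \<in> K" "i < i'" for i i'
      using sep[rule_format, of i i' "p i" "p i'"] Lp K(1) that by simp
  qed fact
  ultimately show ?thesis unfolding K_def by simp
qed

end

definition slot :: "nat set \<Rightarrow> nat \<Rightarrow> nat set \<Rightarrow> nat \<Rightarrow> nat" where
  "slot Y k M j = enumerate Y (k * (sorted_list_of_set M ! j) + j)"

definition slot_row :: "nat set \<Rightarrow> nat \<Rightarrow> nat \<Rightarrow> nat" where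
  "slot_row Y k c = inv (enumerate Y) c mod k"

definition array_embedding :: "(nat \<Rightarrow> nat \<Rightarrow> 'a::real_vector) \<Rightarrow> nat set \<Rightarrow> nat \<Rightarrow> nat set \<Rightarrow> 'a" where
  "array_embedding x Y k M = (\<Sum>j<k. x j (slot Y k M j))"

definition diff_coords :: "nat \<Rightarrow> nat set \<Rightarrow> nat set \<Rightarrow> nat set" where
  "diff_coords k M N = {j. j < k \<and> sorted_list_of_set M ! j \<noteq> sorted_list_of_set N ! j}"

definition diff_slots :: "nat set \<Rightarrow> nat \<Rightarrow> nat set \<Rightarrow> nat set \<Rightarrow> nat set" where
  "diff_slots Y k M N = slot Y k M ` diff_coords k M N \<union> slot Y k N ` diff_coords k M N"

lemma dk_eq_norm_diff_coords: "dk e k M N = norm (\<Sum>j\<in>diff_coords k M N. e j)"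
  by (simp add: dk_def diff_coords_def)

lemma diff_coords_subset: "diff_coords k M N \<subseteq> {..<k}"
  by (auto simp: diff_coords_def)

lemma array_embedding_diff:
  "array_embedding x Y k M - array_embedding x Y k N =
    (\<Sum>j\<in>diff_coords k M N. x j (slot Y k M j)) - (\<Sum>j\<in>diff_coords k M N. x j (slot Y k N j))"
proof -
  have "array_embedding x Y k M - array_embedding x Y k N = (\<Sum>j<k. x j (slot Y k M j) - x j (slot Y k N j))"
    by (simp add: array_embedding_def sum_subtractf)
  also have "\<dots> = (\<Sum>j\<in>diff_coords k M N. x j (slot Y k M j) - x j (slot Y k N j))"
    by (rule sum.mono_neutral_cong_right) (auto simp: diff_coords_def slot_def)
  finally show ?thesis by (simp add: sum_subtractf)
qed

lemma sorted_list_of_set_nth_less: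
  assumes "finite A" "i < j" "j < card A"
  shows "sorted_list_of_set A ! i < sorted_list_of_set A ! j"
  using sorted_wrt_nth_less[OF strict_sorted_list_of_set[of A]] assms by simp

lemma image_sorted_positions:
  assumes "finite T"
  shows "(\<lambda>i. h (sorted_list_of_set T ! i)) ` {i. i < card T \<and> P (sorted_list_of_set T ! i)} = h ` {c\<in>T. P c}"
proof -
  let ?xs = "sorted_list_of_set T"
  have len: "length ?xs = card T" and set: "set ?xs = T" using assms by auto
  have "(\<lambda>i. ?xs ! i) ` {i. i < card T \<and> P (?xs ! i)} = {c\<in>T. P c}"
  proof (intro equalityI subsetI)
    fix c assume "c \<in> (\<lambda>i. ?xs ! i) ` {i. i < card T \<and> P (?xs ! i)}"
    then obtain i where "i < card T" "P (?xs ! i)" "c = ?xs ! i" by blast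
    then show "c \<in> {c\<in>T. P c}" using nth_mem[of i ?xs] len set by auto
  next
    fix c assume c: "c \<in> {c\<in>T. P c}"
    then have "c \<in> set ?xs" using set by simp
    then obtain i where "i < card T" "?xs ! i = c" using len by (metis in_set_conv_nth)
    then show "c \<in> (\<lambda>i. ?xs ! i) ` {i. i < card T \<and> P (?xs ! i)}" using len c by force
  qed
  then show ?thesis by (metis image_image)
qed

context
  fixes Y :: "nat set" and k :: nat and M :: "nat set"
  assumes Y: "infinite Y" and M: "M \<in> ksets k"
begin

lemma slot_in: "slot Y k M j \<in> Y"
  unfolding slot_def using Y by (rule enumerate_in_set)

lemma slot_spread:
  assumes "j < j'" "j' < k"
  shows "slot Y k M j + (j' - j) \<le> slot Y k M j'"
proof -
  have "sorted_list_of_set M ! j < sorted_list_of_set M ! j'"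
    using M assms by (intro sorted_list_of_set_nth_less) (auto simp: ksets_def)
  then have le: "k * (sorted_list_of_set M ! j) + j + (j' - j) \<le> k * (sorted_list_of_set M ! j') + j'"
    using assms by simp
  have "strict_mono (enumerate Y)"
    using Y by (simp add: strict_mono_def enumerate_mono)
  then have "slot Y k M j + (j' - j) \<le> enumerate Y (k * (sorted_list_of_set M ! j) + j + (j' - j))"
    unfolding slot_def by (rule strict_mono_add_le)
  also have "\<dots> \<le> slot Y k M j'"
    unfolding slot_def using le Y by simp
  finally show ?thesis .
qed

lemma slot_less_iff:
  assumes "j < k" "j' < k"
  shows "slot Y k M j < slot Y k M j' \<longleftrightarrow> j < j'"
  using slot_spread[of j j'] slot_spread[of j' j] assms by (cases j j' rule: linorder_cases) auto

lemma slot_row_slot: "j < k \<Longrightarrow> slot_row Y k (slot Y k M j) = j"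
  unfolding slot_row_def slot_def using inv_f_f[OF inj_enumerate[OF Y]] by simp

end

lemma slot_eq_slot_iff:
  assumes "infinite Y" "j < k"
  shows "slot Y k M j = slot Y k N j \<longleftrightarrow> sorted_list_of_set M ! j = sorted_list_of_set N ! j"
  using assms inj_enumerate[OF assms(1)] by (auto simp: slot_def inj_eq)

lemma difference_pattern:
  fixes x :: "nat \<Rightarrow> nat \<Rightarrow> 'a::real_normed_vector" and \<sigma> :: "nat \<Rightarrow> real"
  assumes Y: "infinite Y" and M: "M \<in> ksets k" and N: "N \<in> ksets k"
    and T_def: "T = diff_slots Y k M N"
    and \<rho>_def: "\<rho> = (\<lambda>i. slot_row Y k (sorted_list_of_set T ! i))"
    and \<sigma>_def: "\<sigma> = (\<lambda>i. if sorted_list_of_set T ! i \<in> slot Y k M ` diff_coords k M N then 1 else - 1)"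
  shows "T \<in> [Y]\<^bsup>card T\<^esup>" and "card T \<le> 2 * k"
    and "\<forall>i<card T. \<rho> i < k \<and> \<sigma> i \<in> {-1, 1}"
    and "pattern_sum x \<rho> \<sigma> T = array_embedding x Y k M - array_embedding x Y k N"
    and "\<rho> ` {i. i < card T \<and> \<sigma> i = 1} = diff_coords k M N"
    and "\<And>i i'. i < i' \<Longrightarrow> i' < card T \<Longrightarrow> \<sigma> i = 1 \<Longrightarrow> \<sigma> i' = 1 \<Longrightarrow> \<rho> i < \<rho> i'"
proof -
  define F where "F = diff_coords k M N"
  define sign :: "nat \<Rightarrow> real" where "sign c = (if c \<in> slot Y k M ` F then 1 else - 1)" for c
  have F1: "F \<subseteq> {..<k}" unfolding F_def by (rule diff_coords_subset)
  then have F: "F \<subseteq> {..<k}" "finite F" using finite_subset by auto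
  have row: "slot_row Y k (slot Y k M j) = j" "slot_row Y k (slot Y k N j) = j" if "j \<in> F" for j
    using slot_row_slot[OF Y M] slot_row_slot[OF Y N] F(1) that by auto
  have inj: "inj_on (slot Y k M) F" "inj_on (slot Y k N) F"
    using row by (metis inj_onI)+
  have disj: "slot Y k M ` F \<inter> slot Y k N ` F = {}"
  proof (rule ccontr)
    assume "slot Y k M ` F \<inter> slot Y k N ` F \<noteq> {}"
    then obtain j j' where j: "j \<in> F" "j' \<in> F" and eq: "slot Y k M j = slot Y k N j'" by blast
    then have "j = j'" using row by metis
    then show False using eq j F(1) slot_eq_slot_iff[OF Y, of j k M N] by (auto simp: F_def diff_coords_def)
  qed
  have T: "T = slot Y k M ` F \<union> slot Y k N ` F" unfolding T_def diff_slots_def F_def ..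
  have finT: "finite T" using F by (simp add: T)
  show "T \<in> [Y]\<^bsup>card T\<^esup>"
    using finT slot_in[OF Y M] slot_in[OF Y N] by (auto simp: nsets_def T)
  show "card T \<le> 2 * k"
  proof -
    have "card T \<le> card (slot Y k M ` F) + card (slot Y k N ` F)" unfolding T by (rule card_Un_le)
    also have "\<dots> \<le> card F + card F" by (intro add_mono card_image_le F(2))
    also have "card F \<le> k" using card_mono[OF _ F(1)] by simp
    finally show ?thesis by simp
  qed
  have T_row: "slot_row Y k c \<in> F" if "c \<in> T" for c
    using that row unfolding T by auto
  have nth_T: "sorted_list_of_set T ! i \<in> T" if "i < card T" for i
    using finT that nth_mem[of i "sorted_list_of_set T"] by simp
  have \<rho>\<sigma>: "\<rho> = (\<lambda>i. slot_row Y k (sorted_list_of_set T ! i))" "\<sigma> = (\<lambda>i. sign (sorted_list_of_set T ! i))"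
    unfolding \<rho>_def \<sigma>_def sign_def F_def by simp_all
  show "\<forall>i<card T. \<rho> i < k \<and> \<sigma> i \<in> {-1, 1}"
    using T_row nth_T F(1) unfolding \<rho>\<sigma> sign_def by auto
  have "pattern_sum x \<rho> \<sigma> T = (\<Sum>c\<in>T. sign c *\<^sub>R x (slot_row Y k c) c)"
    unfolding \<rho>\<sigma> by (rule pattern_sum_of_labelled_set[OF finT])
  also have "\<dots> = (\<Sum>c\<in>slot Y k M ` F. sign c *\<^sub>R x (slot_row Y k c) c) +
      (\<Sum>c\<in>slot Y k N ` F. sign c *\<^sub>R x (slot_row Y k c) c)"
    unfolding T using F(2) disj by (intro sum.union_disjoint) auto
  also have "(\<Sum>c\<in>slot Y k M ` F. sign c *\<^sub>R x (slot_row Y k c) c) = (\<Sum>j\<in>F. x j (slot Y k M j))"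
    using row by (simp add: sum.reindex[OF inj(1)] sign_def)
  also have "(\<Sum>c\<in>slot Y k N ` F. sign c *\<^sub>R x (slot_row Y k c) c) = (\<Sum>j\<in>F. - x j (slot Y k N j))"
  proof -
    have "sign (slot Y k N j) = - 1" if "j \<in> F" for j
    proof -
      have "slot Y k N j \<notin> slot Y k M ` F" using disj that by blast
      then show ?thesis unfolding sign_def by simp
    qed
    then show ?thesis using row by (simp add: sum.reindex[OF inj(2)])
  qed
  also have "(\<Sum>j\<in>F. x j (slot Y k M j)) + (\<Sum>j\<in>F. - x j (slot Y k N j)) =
      (\<Sum>j\<in>F. x j (slot Y k M j)) - (\<Sum>j\<in>F. x j (slot Y k N j))"
    by (simp add: sum_negf)
  also have "\<dots> = array_embedding x Y k M - array_embedding x Y k N"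
    unfolding F_def by (rule array_embedding_diff[symmetric])
  finally show "pattern_sum x \<rho> \<sigma> T = array_embedding x Y k M - array_embedding x Y k N" .
  have "{c\<in>T. sign c = 1} = slot Y k M ` F"
    using disj unfolding T sign_def by auto
  then have "slot_row Y k ` {c\<in>T. sign c = 1} = F"
    using row by (simp add: image_image)
  then show "\<rho> ` {i. i < card T \<and> \<sigma> i = 1} = diff_coords k M N"
    using image_sorted_positions[OF finT, of "slot_row Y k" "\<lambda>c. sign c = 1"]
    unfolding \<rho>\<sigma> F_def by simp
  show "\<rho> i < \<rho> i'" if i: "i < i'" "i' < card T" "\<sigma> i = 1" "\<sigma> i' = 1" for i i'
  proof -
    have "sorted_list_of_set T ! i \<in> slot Y k M ` F" "sorted_list_of_set T ! i' \<in> slot Y k M ` F"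
      using i unfolding \<rho>\<sigma> sign_def by (auto split: if_splits)
    then obtain j j' where j: "j \<in> F" "j' \<in> F"
      and eq: "sorted_list_of_set T ! i = slot Y k M j" "sorted_list_of_set T ! i' = slot Y k M j'"
      by blast
    have "sorted_list_of_set T ! i < sorted_list_of_set T ! i'"
      using finT i by (intro sorted_list_of_set_nth_less)
    then have "j < j'" using eq j F(1) slot_less_iff[OF Y M] by auto
    then show ?thesis using eq j row unfolding \<rho>\<sigma> by simp
  qed
qed

context asymptotic_estimate
begin

lemma array_embedding_upper:
  assumes Y: "infinite Y" "Y \<subseteq> {n + k..}" and "k \<le> n" and M: "M \<in> ksets k" and N: "N \<in> ksets k"
  shows "norm (array_embedding x Y k M - array_embedding x Y k N) \<le> 2 * dk e k M N + 2 * err n"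
proof -
  define F where "F = diff_coords k M N"
  have Fk: "F \<subseteq> {..<k}" unfolding F_def by (rule diff_coords_subset)
  have est: "\<bar>norm (\<Sum>j\<in>F. x j (slot Y k L j)) - norm (\<Sum>j\<in>F. e j)\<bar> < err n" if L: "L \<in> ksets k" for L
  proof (rule spread_sum_estimate)
    show "F \<subseteq> {..<n}" using Fk \<open>k \<le> n\<close> by auto
    show "\<forall>j\<in>F. n + j \<le> slot Y k L j"
    proof
      fix j assume "j \<in> F"
      moreover have "slot Y k L j \<in> {n + k..}" using slot_in[OF Y(1) L] Y(2) by blast
      ultimately show "n + j \<le> slot Y k L j" using Fk by auto
    qed
    show "\<forall>j\<in>F. \<forall>j'\<in>F. j < j' \<longrightarrow> slot Y k L j + (j' - j) \<le> slot Y k L j'"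
      using slot_spread[OF Y(1) L] Fk by blast
  qed
  have "norm (array_embedding x Y k M - array_embedding x Y k N) \<le>
      norm (\<Sum>j\<in>F. x j (slot Y k M j)) + norm (\<Sum>j\<in>F. x j (slot Y k N j))"
    unfolding array_embedding_diff F_def by (rule norm_triangle_ineq4)
  then show ?thesis
    using est[OF M] est[OF N] unfolding dk_eq_norm_diff_coords F_def by linarith
qed

end

context normalized_asymptotic_estimate
begin

lemma array_embedding_lower:
  fixes \<eta> \<delta> :: real
  assumes Y: "infinite Y" "Y \<subseteq> {n + k..}" and "k \<le> n" "0 < \<delta>"
    and stable: "patterns_stable x k \<eta> Y" and M: "M \<in> ksets k" and N: "N \<in> ksets k"
  shows "dk e k M N \<le> norm (array_embedding x Y k M - array_embedding x Y k N) + \<eta> + 2 * real k * \<delta> + err n"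
proof -
  define T where "T = diff_slots Y k M N"
  define \<rho> where "\<rho> = (\<lambda>i. slot_row Y k (sorted_list_of_set T ! i))"
  define \<sigma> :: "nat \<Rightarrow> real"
    where "\<sigma> = (\<lambda>i. if sorted_list_of_set T ! i \<in> slot Y k M ` diff_coords k M N then 1 else - 1)"
  note pattern = difference_pattern[OF Y(1) M N T_def \<rho>_def \<sigma>_def]
  let ?d = "array_embedding x Y k M - array_embedding x Y k N"
  have bound: "norm (pattern_sum x \<rho> \<sigma> X) \<le> norm ?d + \<eta>" if "X \<in> [Y]\<^bsup>card T\<^esup>" for X
  proof -
    have "\<bar>norm (pattern_sum x \<rho> \<sigma> X) - norm (pattern_sum x \<rho> \<sigma> T)\<bar> < \<eta>"
      using stable pattern(2,3) that pattern(1) by (rule patterns_stableD)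
    then show ?thesis unfolding pattern(4) by linarith
  qed
  have "norm (\<Sum>j\<in>\<rho> ` {i. i < card T \<and> \<sigma> i = 1}. e j) \<le> (norm ?d + \<eta>) + card T * \<delta> + err n"
    by (rule block_lower_estimate[OF Y \<open>k \<le> n\<close> \<open>0 < \<delta>\<close> bound]) (use pattern(3,6) in auto)
  moreover have "card T * \<delta> \<le> 2 * real k * \<delta>"
    using pattern(2) \<open>0 < \<delta>\<close> by (simp add: mult_right_mono)
  ultimately show ?thesis
    unfolding pattern(5) dk_eq_norm_diff_coords by simp
qed

end

lemma basic_sequence_sum_nonzero:
  assumes "basic_sequence e" "finite F" "F \<noteq> {}"
  shows "(\<Sum>j\<in>F. e j) \<noteq> 0"
proof
  assume zero: "(\<Sum>j\<in>F. e j) = 0"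
  define a :: "nat \<Rightarrow> real" where "a i = (if i \<in> F then 1 else 0)" for i
  have "0 \<in> closure (span (range e))"
    by (simp add: span_zero closure_subset[THEN subsetD])
  then have unique: "\<exists>!b :: nat \<Rightarrow> real. (\<lambda>n. \<Sum>i<n. b i *\<^sub>R e i) \<longlonglongrightarrow> 0"
    using assms(1) unfolding basic_sequence_def by blast
  have "(\<lambda>n. \<Sum>i<n. a i *\<^sub>R e i) \<longlonglongrightarrow> 0"
  proof (rule tendsto_eventually, rule eventually_sequentiallyI[where c = "Suc (Max F)"])
    fix n assume "Suc (Max F) \<le> n"
    then have "F \<subseteq> {..<n}" using Max_ge[OF assms(2)] by fastforce
    then have "(\<Sum>i<n. a i *\<^sub>R e i) = (\<Sum>j\<in>F. e j)"
      by (intro sum.mono_neutral_cong_right) (auto simp: a_def)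
    then show "(\<Sum>i<n. a i *\<^sub>R e i) = 0" using zero by simp
  qed
  then have "(THE b. (\<lambda>n. \<Sum>i<n. b i *\<^sub>R e i) \<longlonglongrightarrow> 0) = a"
    by (rule the1_equality[OF unique])
  moreover have "(THE b :: nat \<Rightarrow> real. (\<lambda>n. \<Sum>i<n. b i *\<^sub>R e i) \<longlonglongrightarrow> 0) = (\<lambda>_. 0)"
    by (rule the1_equality[OF unique]) simp
  ultimately have a0: "a = (\<lambda>_. 0)" by simp
  obtain j where "j \<in> F" using assms(3) by blast
  then have "a j = 1" by (simp add: a_def)
  then show False using a0 by simp
qed

lemma basic_sequence_sums_bounded_below:
  assumes "basic_sequence e"
  obtains \<delta> where "0 < \<delta>" "\<And>F. F \<subseteq> {..<k} \<Longrightarrow> F \<noteq> {} \<Longrightarrow> \<delta> \<le> norm (\<Sum>j\<in>F. e j)"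
proof -
  define S where "S = insert 1 ((\<lambda>F. norm (\<Sum>j\<in>F. e j)) ` {F. F \<subseteq> {..<k} \<and> F \<noteq> {}})"
  have "{F. F \<subseteq> {..<k} \<and> F \<noteq> {}} \<subseteq> Pow {..<k}" by auto
  then have "finite {F. F \<subseteq> {..<k} \<and> F \<noteq> {}}" by (rule finite_subset) simp
  then have "finite S" unfolding S_def by simp
  have "0 < s" if s: "s \<in> S" for s
  proof -
    consider "s = 1" | F where "F \<subseteq> {..<k}" "F \<noteq> {}" "s = norm (\<Sum>j\<in>F. e j)"
      using s unfolding S_def by blast
    then show ?thesis
    proof cases
      case 2
      then have "finite F" using finite_subset by blast
      then show ?thesis using basic_sequence_sum_nonzero[OF assms _ \<open>F \<noteq> {}\<close>] 2 by simp
    qed simp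
  qed
  then have "0 < Min S" using \<open>finite S\<close> by (simp add: S_def)
  moreover have "Min S \<le> norm (\<Sum>j\<in>F. e j)" if "F \<subseteq> {..<k}" "F \<noteq> {}" for F
    using \<open>finite S\<close> that by (intro Min_le) (auto simp: S_def)
  ultimately show ?thesis using that by blast
qed

lemma (in normalized_asymptotic_estimate) array_embedding_estimates:
  assumes "0 < k" "0 < \<tau>" "err \<longlonglongrightarrow> 0"
  obtains Y where "\<And>M N. M \<in> ksets k \<Longrightarrow> N \<in> ksets k \<Longrightarrow>
      dk e k M N - \<tau> \<le> norm (array_embedding x Y k M - array_embedding x Y k N) \<and>
      norm (array_embedding x Y k M - array_embedding x Y k N) \<le> 2 * dk e k M N + \<tau>"
proof -
  have "eventually (\<lambda>n. err n < \<tau> / 3) sequentially"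
    by (rule order_tendstoD(2)[OF assms(3)]) (use assms(2) in simp)
  then obtain n0 where n0: "\<And>n. n0 \<le> n \<Longrightarrow> err n < \<tau> / 3"
    unfolding eventually_sequentially by blast
  define n where "n = max k n0"
  have n: "k \<le> n" "err n < \<tau> / 3" using n0 by (auto simp: n_def)
  have "\<And>i j. norm (x i j) \<le> 1" "infinite {n + k..}" "0 < \<tau> / 3"
    using assms(2) by (simp_all add: infinite_Ici)
  then obtain Y where Y: "Y \<subseteq> {n + k..}" "infinite Y" and stable: "patterns_stable x k (\<tau> / 3) Y"
    by (rule exists_patterns_stable)
  define \<delta> where "\<delta> = \<tau> / (6 * k)"
  have \<delta>: "0 < \<delta>" "2 * real k * \<delta> = \<tau> / 3" using assms(1,2) by (simp_all add: \<delta>_def)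
  show ?thesis
  proof (rule that)
    fix M N assume MN: "M \<in> ksets k" "N \<in> ksets k"
    have "dk e k M N \<le> norm (array_embedding x Y k M - array_embedding x Y k N) + \<tau> / 3 + 2 * real k * \<delta> + err n"
      by (rule array_embedding_lower[OF Y(2,1) n(1) \<delta>(1) stable MN])
    moreover have "norm (array_embedding x Y k M - array_embedding x Y k N) \<le> 2 * dk e k M N + 2 * err n"
      by (rule array_embedding_upper[OF Y(2,1) n(1) MN])
    ultimately show "dk e k M N - \<tau> \<le> norm (array_embedding x Y k M - array_embedding x Y k N) \<and>
        norm (array_embedding x Y k M - array_embedding x Y k N) \<le> 2 * dk e k M N + \<tau>"
      using n(2) \<delta>(2) assms(2) by (intro conjI) linarith+
  qed
qed

lemma additive_error_absorbed:
  fixes d a \<epsilon> \<delta> :: real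
  assumes "0 < \<epsilon>" "\<delta> \<le> d" "d - \<epsilon> * \<delta> / (3 + \<epsilon>) \<le> a" "a \<le> 2 * d + \<epsilon> * \<delta> / (3 + \<epsilon>)"
  shows "3 / (3 + \<epsilon>) * d \<le> a \<and> a \<le> 3 / (3 + \<epsilon>) * (2 + \<epsilon>) * d"
proof -
  have "\<epsilon> * \<delta> \<le> \<epsilon> * d" using mult_left_mono[OF assms(2)] assms(1) by simp
  then have "\<epsilon> * \<delta> / (3 + \<epsilon>) \<le> \<epsilon> * d / (3 + \<epsilon>)"
    using assms(1) by (simp add: divide_right_mono)
  moreover have "3 / (3 + \<epsilon>) * d = d - \<epsilon> * d / (3 + \<epsilon>)"
    and "3 / (3 + \<epsilon>) * (2 + \<epsilon>) * d = 2 * d + \<epsilon> * d / (3 + \<epsilon>)"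
    using assms(1) by (simp_all add: field_simps)
  ultimately show ?thesis using assms(3,4) by linarith
qed

theorem theorem3p9:
  fixes x :: "nat \<Rightarrow> nat \<Rightarrow> 'a::banach"
    and e :: "nat \<Rightarrow> 'b::banach"
    and k :: nat and \<epsilon> :: real
  assumes "normalized_weakly_null_array x"
    and "asymptotic_model e x"
    and "\<epsilon> > 0"
  shows "\<exists>s > 0. \<exists>f :: nat set \<Rightarrow> 'a. \<forall>M \<in> ksets k. \<forall>N \<in> ksets k.
           s * dk e k M N \<le> norm (f M - f N) \<and>
           norm (f M - f N) \<le> s * (2 + \<epsilon>) * dk e k M N"
proof -
  obtain err where "err \<longlonglongrightarrow> 0" and basic: "basic_sequence e"
    and estimate: "\<forall>n a kk. (\<forall>i<n. -1 \<le> a i \<and> a i \<le> 1) \<longrightarrow> (0 < n \<longrightarrow> n \<le> kk 0) \<longrightarrow>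
      (\<forall>i j. i < j \<and> j < n \<longrightarrow> kk i < kk j) \<longrightarrow>
      \<bar>norm (\<Sum>i<n. a i *\<^sub>R x i (kk i)) - norm (\<Sum>i<n. a i *\<^sub>R e i)\<bar> < err n"
    using assms(2) unfolding asymptotic_model_def by blast
  interpret normalized_asymptotic_estimate x e err
  proof unfold_locales
    show "normalized_weakly_null_array x" by (rule assms(1))
  qed (use estimate in blast)
  show ?thesis
  proof (cases "k = 0")
    case True
    then show ?thesis by (intro exI[of _ 1] conjI exI[of _ "\<lambda>_. 0"]) (simp_all add: dk_def)
  next
    case False
    obtain \<delta> where "0 < \<delta>" and \<delta>: "\<And>F. F \<subseteq> {..<k} \<Longrightarrow> F \<noteq> {} \<Longrightarrow> \<delta> \<le> norm (\<Sum>j\<in>F. e j)"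
      using basic_sequence_sums_bounded_below[OF basic] by blast
    have "0 < k" "0 < \<epsilon> * \<delta> / (3 + \<epsilon>)" using False \<open>0 < \<delta>\<close> assms(3) by simp_all
    from array_embedding_estimates[OF this \<open>err \<longlonglongrightarrow> 0\<close>]
    obtain Y where Y: "\<And>M N. M \<in> ksets k \<Longrightarrow> N \<in> ksets k \<Longrightarrow>
        dk e k M N - \<epsilon> * \<delta> / (3 + \<epsilon>) \<le> norm (array_embedding x Y k M - array_embedding x Y k N) \<and>
        norm (array_embedding x Y k M - array_embedding x Y k N) \<le> 2 * dk e k M N + \<epsilon> * \<delta> / (3 + \<epsilon>)"
      by blast
    have "3 / (3 + \<epsilon>) * dk e k M N \<le> norm (array_embedding x Y k M - array_embedding x Y k N) \<and>
        norm (array_embedding x Y k M - array_embedding x Y k N) \<le> 3 / (3 + \<epsilon>) * (2 + \<epsilon>) * dk e k M N"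
      if "M \<in> ksets k" "N \<in> ksets k" for M N
    proof (cases "diff_coords k M N = {}")
      case True
      then show ?thesis by (simp add: array_embedding_diff dk_eq_norm_diff_coords)
    next
      case False
      then have "\<delta> \<le> dk e k M N"
        unfolding dk_eq_norm_diff_coords using \<delta> diff_coords_subset by blast
      then show ?thesis using Y[OF that] assms(3) by (intro additive_error_absorbed) auto
    qed
    then show ?thesis using assms(3) by (intro exI[of _ "3 / (3 + \<epsilon>)"] exI[of _ "array_embedding x Y k"]) auto
  qed
qed

end
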